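(* Let $\mathbf{p}_1,\mathbf{p}_2,\mathbf{p}_3\in\mathbb{R}^n$, and set $a=\|\mathbf{p}_1-\mathbf{p}_2\|$, $b=\|\mathbf{p}_2-\mathbf{p}_3\|$, $c=\|\mathbf{p}_1-\mathbf{p}_3\|$. Then the degree of monotonicity of the sequence $\mathbf{p}_1,\mathbf{p}_2,\mathbf{p}_3$ equals \[ R=\begin{cases}\tfrac12 c & \text{if } a^2+b^2>c^2,\\ R^{\mathrm{outcircle}} & \text{otherwise,}\end{cases} \] where $R^{\mathrm{outcircle}}$ is the radius of the circle passing through $\mathbf{p}_1,\mathbf{p}_2,\mathbf{p}_3$.
   Context: A closed ball in $\mathbb{R}^n$ is a set $\{x:\|x-q\|\le\rho\}$ with radius $\rho$. The degree of monotonicity of a finite sequence (vector-valued signal) $\mathbf{p}_1,\mathbf{p}_2,\mathbf{p}_3$ is the largest value $R$ such that, for every closed ball $B$ of radius at most $R$, the set of indices $\{i\in\{1,2,3\}:\mathbf{p}_i\in B\}$ is a set of consecutive integers. The circumradius $R^{\mathrm{outcircle}}$ of the three points is given (whenever $a,b,c>0$) by Heron's formula $R^{\mathrm{outcircle}}=\frac{abc}{4\sqrt{\sigma(\sigma-a)(\sigma-b)(\sigma-c)}}$ with $\sigma=(a+b+c)/2$. *)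

theory Defs
  imports "HOL-Analysis.Analysis" "HOL-Library.Extended_Real"
begin

definition consecutive_set :: "nat set \<Rightarrow> bool" where
  "consecutive_set S \<longleftrightarrow> (\<forall>i j k. i \<le> j \<and> j \<le> k \<and> i \<in> S \<and> k \<in> S \<longrightarrow> j \<in> S)"

definition indices_in :: "'a list \<Rightarrow> 'a set \<Rightarrow> nat set" where
  "indices_in ps B = {i. 1 \<le> i \<and> i \<le> length ps \<and> ps ! (i - 1) \<in> B}"

text \<open>Taken in the
  extended reals, so that it is \<infinity> when every radius works.\<close>
definition degree_of_monotonicity :: "('a::metric_space) list \<Rightarrow> ereal" where
  "degree_of_monotonicity ps =
     Sup {ereal R | R. \<forall>q \<rho>. 0 \<le> \<rho> \<and> \<rho> \<le> R \<longrightarrow> consecutive_set (indices_in ps (cball q \<rho>))}"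

text \<open>Circumradius via Heron's formula; \<infinity> for degenerate (collinear) triples, where no
  circle passes through the three points.\<close>
definition circumradius :: "'a::real_normed_vector \<Rightarrow> 'a \<Rightarrow> 'a \<Rightarrow> ereal" where
  "circumradius p1 p2 p3 =
     (let a = norm (p1 - p2); b = norm (p2 - p3); c = norm (p1 - p3);
          \<sigma> = (a + b + c) / 2;
          H = \<sigma> * (\<sigma> - a) * (\<sigma> - b) * (\<sigma> - c)
      in if H = 0 then \<infinity> else ereal (a * b * c / (4 * sqrt H)))"

end

theory Submission
  imports Defs
begin

(* Move p2 to the origin and write u = p1 - p2, v = p3 - p2.  Monotonicity fails for a
   ball exactly when it contains u and v but not 0, so the degree is the infimum of the
   radii of such skipping balls.
   If the angle at p2 is acute, the ball with diameter [u, v] skips 0, and no ball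
   containing u and v is smaller.
   If p2 lies on the segment [p1, p3], no ball skips it, since balls are convex.
   Otherwise the circumcentre z of 0, u, v is s u + t v with s, t \<ge> 0 and s + t \<ge> 1.  For a
   skipping ball centred at z + w we get w \<bullet> u > 0 and w \<bullet> v > 0, hence
   w \<bullet> z \<ge> min (w \<bullet> u) (w \<bullet> v), and this forces the radius to be at least |z|.  Conversely,
   for k > 1, the ball centred at k z through 0 contains u and v in its interior, so a
   slightly smaller ball skips 0. *)

lemma consecutive_set_subset_3:
  assumes "I \<subseteq> {1, 2, 3}"
  shows "consecutive_set I \<longleftrightarrow> \<not> (1 \<in> I \<and> 3 \<in> I \<and> 2 \<notin> I)"
  unfolding consecutive_set_def
proof (intro iffI notI allI impI)
  assume "\<forall>i j k. i \<le> j \<and> j \<le> k \<and> i \<in> I \<and> k \<in> I \<longrightarrow> j \<in> I"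
    and "1 \<in> I \<and> 3 \<in> I \<and> 2 \<notin> I"
  moreover have "(1::nat) \<le> 2" "(2::nat) \<le> 3"
    by simp_all
  ultimately show False
    by blast
next
  fix i j k :: nat
  assume gap: "\<not> (1 \<in> I \<and> 3 \<in> I \<and> 2 \<notin> I)" and ijk: "i \<le> j \<and> j \<le> k \<and> i \<in> I \<and> k \<in> I"
  have "i \<in> {1, 2, 3}" "k \<in> {1, 2, 3}"
    using assms ijk by auto
  with ijk have "j = i \<or> j = k \<or> (i = 1 \<and> j = 2 \<and> k = 3)"
    by auto
  with gap ijk show "j \<in> I"
    by auto
qed

lemma consecutive_set_indices_in_3:
  "consecutive_set (indices_in [p1, p2, p3] S) \<longleftrightarrow> \<not> (p1 \<in> S \<and> p3 \<in> S \<and> p2 \<notin> S)"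
proof -
  have "indices_in [p1, p2, p3] S \<subseteq> {1, 2, 3}"
    by (auto simp: indices_in_def)
  then show ?thesis
    by (simp add: consecutive_set_subset_3 indices_in_def)
qed

lemma indices_in_map: "indices_in (map f ps) B = indices_in ps (f -` B)"
  by (auto simp: indices_in_def)

lemma degree_of_monotonicity_translate:
  fixes ps :: "'a::real_normed_vector list"
  shows "degree_of_monotonicity (map (\<lambda>p. p + t) ps) = degree_of_monotonicity ps"
proof -
  have cball: "(\<lambda>p. p + t) -` cball q \<rho> = cball (q - t) \<rho>" for q \<rho>
    by (auto simp: dist_norm algebra_simps)
  have "(\<forall>q \<rho>. 0 \<le> \<rho> \<and> \<rho> \<le> R \<longrightarrow> consecutive_set (indices_in ps (cball (q - t) \<rho>))) \<longleftrightarrow>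
        (\<forall>q \<rho>. 0 \<le> \<rho> \<and> \<rho> \<le> R \<longrightarrow> consecutive_set (indices_in ps (cball q \<rho>)))" for R
    by (metis add_diff_cancel)
  then show ?thesis
    unfolding degree_of_monotonicity_def indices_in_map cball by simp
qed

lemma Sup_ereal_eqI:
  assumes "\<And>R. P R \<Longrightarrow> R \<le> T" and "\<And>R. R < T \<Longrightarrow> P R"
  shows "Sup {ereal R | R. P R} = ereal T"
proof (rule antisym)
  show "Sup {ereal R | R. P R} \<le> ereal T"
    by (rule Sup_least) (auto intro: assms(1))
  show "ereal T \<le> Sup {ereal R | R. P R}"
  proof (rule dense_le)
    fix y assume y: "y < ereal T"
    show "y \<le> Sup {ereal R | R. P R}"
    proof (cases y)
      case (real r)
      with y assms(2) show ?thesis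
        by (auto intro: Sup_upper)
    qed (use y in auto)
  qed
qed

definition cball_skips :: "'a::metric_space \<Rightarrow> real \<Rightarrow> 'a \<Rightarrow> 'a \<Rightarrow> 'a \<Rightarrow> bool" where
  "cball_skips q \<rho> p1 p2 p3 \<longleftrightarrow> p1 \<in> cball q \<rho> \<and> p3 \<in> cball q \<rho> \<and> p2 \<notin> cball q \<rho>"

lemma degree_of_monotonicity_3:
  "degree_of_monotonicity [p1, p2, p3] =
     Sup {ereal R | R. \<forall>q \<rho>. \<rho> \<le> R \<longrightarrow> \<not> cball_skips q \<rho> p1 p2 p3}"
proof -
  have "(\<forall>q \<rho>. 0 \<le> \<rho> \<and> \<rho> \<le> R \<longrightarrow> consecutive_set (indices_in [p1, p2, p3] (cball q \<rho>))) \<longleftrightarrow>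
        (\<forall>q \<rho>. \<rho> \<le> R \<longrightarrow> \<not> cball_skips q \<rho> p1 p2 p3)" for R
    unfolding consecutive_set_indices_in_3 cball_skips_def mem_cball
    by (meson zero_le_dist order_trans)
  then show ?thesis
    unfolding degree_of_monotonicity_def by simp
qed

lemma degree_of_monotonicity_3_eqI:
  assumes lower: "\<And>q \<rho>. cball_skips q \<rho> p1 p2 p3 \<Longrightarrow> T \<le> \<rho>"
    and upper: "\<And>R. T < R \<Longrightarrow> \<exists>q \<rho>. \<rho> \<le> R \<and> cball_skips q \<rho> p1 p2 p3"
  shows "degree_of_monotonicity [p1, p2, p3] = ereal T"
  unfolding degree_of_monotonicity_3
proof (rule Sup_ereal_eqI)
  show "R \<le> T" if "\<forall>q \<rho>. \<rho> \<le> R \<longrightarrow> \<not> cball_skips q \<rho> p1 p2 p3" for R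
    using upper that by (meson not_le)
  show "\<forall>q \<rho>. \<rho> \<le> R \<longrightarrow> \<not> cball_skips q \<rho> p1 p2 p3" if "R < T" for R
    using lower that by fastforce
qed

lemma degree_of_monotonicity_3_segment:
  fixes p1 p2 p3 :: "'a::real_normed_vector"
  assumes "p2 \<in> closed_segment p1 p3"
  shows "degree_of_monotonicity [p1, p2, p3] = \<infinity>"
proof -
  have "p2 \<in> cball q \<rho>" if "p1 \<in> cball q \<rho>" "p3 \<in> cball q \<rho>" for q \<rho>
    using closed_segment_subset[OF that convex_cball] assms by blast
  then have "\<not> cball_skips q \<rho> p1 p2 p3" for q \<rho>
    by (auto simp: cball_skips_def)
  then show ?thesis
    unfolding degree_of_monotonicity_3 by (auto intro: ereal_top Sup_upper)
qed

lemma cball_skips_dist_le: "cball_skips q \<rho> p1 p2 p3 \<Longrightarrow> dist p1 p3 \<le> 2 * \<rho>"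
  unfolding cball_skips_def mem_cball using dist_triangle3[of p1 p3 q] by linarith

lemma degree_of_monotonicity_acute:
  fixes u v :: "'a::real_inner"
  assumes "0 < u \<bullet> v"
  shows "degree_of_monotonicity [u, 0, v] = ereal (dist u v / 2)"
proof (rule degree_of_monotonicity_3_eqI)
  show "dist u v / 2 \<le> \<rho>" if "cball_skips q \<rho> u 0 v" for q \<rho>
    using cball_skips_dist_le[OF that] by simp
  have "dist u v < norm (u + v)"
    using assms by (simp add: dist_norm norm_lt inner_add inner_diff inner_commute)
  then have "dist u v / 2 < dist (midpoint u v) 0"
    by (simp add: midpoint_def)
  then have "cball_skips (midpoint u v) (dist u v / 2) u 0 v"
    by (simp add: cball_skips_def dist_midpoint)
  then show "\<exists>q \<rho>. \<rho> \<le> R \<and> cball_skips q \<rho> u 0 v" if "dist u v / 2 < R" for R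
    using that by (blast intro: less_imp_le)
qed

lemma norm_diff_less_norm_iff:
  fixes x u :: "'a::real_inner"
  shows "norm (x - u) < norm x \<longleftrightarrow> u \<bullet> u < 2 * (x \<bullet> u)"
  by (simp add: norm_lt inner_diff inner_commute)

lemma norm_diff_eq_norm_iff:
  fixes z u :: "'a::real_inner"
  shows "norm (z - u) = norm z \<longleftrightarrow> u \<bullet> u = 2 * (z \<bullet> u)"
  by (auto simp: norm_eq inner_diff inner_commute)

lemma norm_le_norm_add:
  fixes a w :: "'a::real_inner"
  assumes "0 \<le> a \<bullet> w"
  shows "norm a \<le> norm (a + w)"
proof -
  have "(a + w) \<bullet> (a + w) = a \<bullet> a + 2 * (a \<bullet> w) + w \<bullet> w"
    by (simp add: inner_add inner_commute)
  then show ?thesis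
    unfolding norm_le using assms inner_ge_zero[of w] by linarith
qed

definition gram_det :: "'a::real_inner \<Rightarrow> 'a \<Rightarrow> real" where
  "gram_det u v = (u \<bullet> u) * (v \<bullet> v) - (u \<bullet> v)\<^sup>2"

lemma gram_det_nonneg: "0 \<le> gram_det u v"
proof -
  have "\<bar>u \<bullet> v\<bar> \<le> norm u * norm v"
    by (rule Cauchy_Schwarz_ineq2)
  then have "(u \<bullet> v)\<^sup>2 \<le> (norm u * norm v)\<^sup>2"
    by (metis abs_ge_zero power2_abs power_mono)
  then show ?thesis
    by (simp add: gram_det_def power_mult_distrib power2_norm_eq_inner)
qed

lemma circumcenter_in_cone:
  fixes u v :: "'a::real_inner"
  assumes obtuse: "u \<bullet> v \<le> 0" and nondegenerate: "0 < gram_det u v"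
  obtains z s t where "z = s *\<^sub>R u + t *\<^sub>R v" "0 \<le> s" "0 \<le> t" "1 \<le> s + t"
    and "norm (z - u) = norm z" "norm (z - v) = norm z"
    and "norm z = norm u * norm v * norm (u - v) / (2 * sqrt (gram_det u v))"
proof -
  define A B C G where "A = u \<bullet> u" "B = v \<bullet> v" "C = u \<bullet> v" "G = gram_det u v"
  have G: "G = A * B - C\<^sup>2" "0 < G"
    using nondegenerate by (simp_all add: A_B_C_G_def gram_det_def)
  \<comment> \<open>Cramer's rule for the linear system 2 z \<bullet> u = A, 2 z \<bullet> v = B with z = s u + t v.\<close>
  define s t where "s = B * (A - C) / (2 * G)" "t = A * (B - C) / (2 * G)"
  define z where "z = s *\<^sub>R u + t *\<^sub>R v"
  have "z \<bullet> u = s * A + t * C" "z \<bullet> v = s * C + t * B"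
    by (simp_all add: z_def inner_add_left A_B_C_G_def inner_commute[of v u])
  moreover have "A * (B * (A - C)) + C * (A * (B - C)) = A * G"
    and "C * (B * (A - C)) + B * (A * (B - C)) = B * G"
    unfolding G(1) power2_eq_square by algebra+
  ultimately have zu: "2 * (z \<bullet> u) = A" and zv: "2 * (z \<bullet> v) = B"
    using G(2) by (simp_all add: s_t_def field_simps)
  have "z \<bullet> z = s * (z \<bullet> u) + t * (z \<bullet> v)"
    using inner_add_right[of z "s *\<^sub>R u" "t *\<^sub>R v"] by (simp add: z_def [symmetric])
  also have "\<dots> = (s * A + t * B) / 2"
    by (simp flip: zu zv)
  also have "\<dots> = A * B * (A + B - 2 * C) / (4 * G)"
    using G(2) by (simp add: s_t_def field_simps)
  also have "A + B - 2 * C = (u - v) \<bullet> (u - v)"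
    by (simp add: A_B_C_G_def inner_diff inner_commute)
  finally have "norm z = sqrt (A * B * ((u - v) \<bullet> (u - v))) / (2 * sqrt G)"
    by (simp add: norm_eq_sqrt_inner real_sqrt_divide real_sqrt_mult)
  also have "\<dots> = norm u * norm v * norm (u - v) / (2 * sqrt G)"
    by (simp add: A_B_C_G_def norm_eq_sqrt_inner real_sqrt_mult)
  finally have radius: "norm z = norm u * norm v * norm (u - v) / (2 * sqrt (gram_det u v))"
    by (simp add: A_B_C_G_def)
  have "0 \<le> A" "0 \<le> B" "C \<le> 0"
    using obtuse by (simp_all add: A_B_C_G_def)
  then have "0 \<le> s" "0 \<le> t"
    using G(2) by (simp_all add: s_t_def)
  have "0 \<le> A + B - 2 * C"
    using inner_ge_zero[of "u - v"] by (simp add: A_B_C_G_def inner_diff inner_commute)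
  with \<open>C \<le> 0\<close> have "0 \<le> - C * (A + B - 2 * C)"
    by (intro mult_nonneg_nonneg) simp_all
  also have "- C * (A + B - 2 * C) = B * (A - C) + A * (B - C) - 2 * G"
    unfolding G(1) by (simp add: power2_eq_square algebra_simps)
  finally have "2 * G \<le> B * (A - C) + A * (B - C)"
    by simp
  then have "1 \<le> s + t"
    using G(2) by (simp add: s_t_def le_divide_eq flip: add_divide_distrib)
  show thesis
  proof (rule that)
    show "norm (z - u) = norm z" "norm (z - v) = norm z"
      using zu zv by (simp_all add: norm_diff_eq_norm_iff A_B_C_G_def)
  qed fact+
qed

lemma circumcenter_norm_le_skipping_radius:
  fixes u v z x :: "'a::real_inner"
  assumes cone: "z = s *\<^sub>R u + t *\<^sub>R v" "0 \<le> s" "0 \<le> t" "1 \<le> s + t"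
    and equidistant: "norm (z - u) = norm z" "norm (z - v) = norm z"
    and skips: "cball_skips x \<rho> u 0 v"
  shows "norm z \<le> \<rho>"
proof -
  define w where "w = x - z"
  have near: "norm (x - u) \<le> \<rho>" "norm (x - v) \<le> \<rho>" and far: "\<rho> < norm x"
    using skips by (auto simp: cball_skips_def dist_norm norm_minus_commute)
  then have "norm (x - u) < norm x" "norm (x - v) < norm x"
    by linarith+
  then have wu: "0 < w \<bullet> u" and wv: "0 < w \<bullet> v"
    using equidistant
    by (simp_all add: w_def inner_diff_left norm_diff_less_norm_iff norm_diff_eq_norm_iff)
  define m where "m = min (w \<bullet> u) (w \<bullet> v)"
  have "m \<le> (s + t) * m"
    using wu wv cone(4) by (simp add: m_def)
  also have "\<dots> \<le> s * (w \<bullet> u) + t * (w \<bullet> v)"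
    using cone(2,3) by (simp add: m_def distrib_right mult_left_mono add_mono)
  also have "\<dots> = w \<bullet> z"
    by (simp add: cone(1) inner_add_right)
  finally obtain y where y: "y \<in> {u, v}" "w \<bullet> y \<le> w \<bullet> z"
    by (metis m_def insertCI min_def)
  have "norm z = norm (z - y)"
    using y(1) equidistant by auto
  also have "\<dots> \<le> norm (z - y + w)"
    using y(2) by (intro norm_le_norm_add) (simp add: inner_diff inner_commute)
  also have "\<dots> \<le> \<rho>"
    using y(1) near by (auto simp: w_def)
  finally show ?thesis .
qed

lemma norm_scaleR_diff_less:
  fixes z u :: "'a::real_inner"
  assumes "norm (z - u) = norm z" "u \<noteq> 0" "1 < k"
  shows "norm (k *\<^sub>R z - u) < norm (k *\<^sub>R z)"
proof -
  have "0 < u \<bullet> u"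
    using assms(2) by simp
  with assms(3) have "u \<bullet> u < k * (u \<bullet> u)"
    using mult_strict_right_mono[of 1 k "u \<bullet> u"] by simp
  also have "\<dots> = 2 * (k *\<^sub>R z \<bullet> u)"
    using assms(1) by (simp add: norm_diff_eq_norm_iff)
  finally show ?thesis
    unfolding norm_diff_less_norm_iff .
qed

lemma skipping_cball_beyond_circumcenter:
  fixes u v z :: "'a::real_inner"
  assumes equidistant: "norm (z - u) = norm z" "norm (z - v) = norm z"
    and "u \<noteq> 0" "v \<noteq> 0" and "norm z < R"
  shows "\<exists>x \<rho>. \<rho> \<le> R \<and> cball_skips x \<rho> u 0 v"
proof -
  have "z \<noteq> 0"
    using equidistant(1) \<open>u \<noteq> 0\<close> by auto
  define k where "k = R / norm z"
  define x where "x = k *\<^sub>R z"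
  have "0 < R"
    using \<open>norm z < R\<close> norm_ge_zero[of z] by linarith
  then have "1 < k" "norm x = R"
    using \<open>z \<noteq> 0\<close> \<open>norm z < R\<close> by (simp_all add: k_def x_def)
  moreover have "norm (x - u) < norm x" "norm (x - v) < norm x"
    using norm_scaleR_diff_less assms \<open>1 < k\<close> by (simp_all add: x_def)
  ultimately show ?thesis
    by (intro exI[of _ x] exI[of _ "max (norm (x - u)) (norm (x - v))"])
      (auto simp: cball_skips_def dist_norm norm_minus_commute)
qed

lemma degree_of_monotonicity_obtuse:
  fixes u v :: "'a::real_inner"
  assumes "u \<bullet> v \<le> 0" and "0 < gram_det u v"
  shows "degree_of_monotonicity [u, 0, v] =
    ereal (norm u * norm v * norm (u - v) / (2 * sqrt (gram_det u v)))"
proof -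
  obtain z s t where cone: "z = s *\<^sub>R u + t *\<^sub>R v" "0 \<le> s" "0 \<le> t" "1 \<le> s + t"
    and equidistant: "norm (z - u) = norm z" "norm (z - v) = norm z"
    and radius: "norm z = norm u * norm v * norm (u - v) / (2 * sqrt (gram_det u v))"
    using circumcenter_in_cone[OF assms] .
  have "u \<noteq> 0" "v \<noteq> 0"
    using assms(2) by (auto simp: gram_det_def)
  show ?thesis
    unfolding radius [symmetric]
  proof (rule degree_of_monotonicity_3_eqI)
    show "norm z \<le> \<rho>" if "cball_skips q \<rho> u 0 v" for q \<rho>
      using circumcenter_norm_le_skipping_radius[OF cone equidistant that] .
    show "\<exists>q \<rho>. \<rho> \<le> R \<and> cball_skips q \<rho> u 0 v" if "norm z < R" for R
      using skipping_cball_beyond_circumcenter[OF equidistant \<open>u \<noteq> 0\<close> \<open>v \<noteq> 0\<close> that] .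
  qed
qed

lemma zero_in_closed_segment_if_gram_det_eq_0:
  fixes u v :: "'a::euclidean_space"
  assumes "u \<bullet> v \<le> 0" and "gram_det u v = 0"
  shows "0 \<in> closed_segment u v"
proof -
  have "(u \<bullet> v)\<^sup>2 = (norm u * norm v)\<^sup>2"
    using assms(2) by (simp add: gram_det_def power_mult_distrib power2_norm_eq_inner)
  with assms(1) have "u \<bullet> v = - (norm u * norm v)"
    by (metis abs_of_nonpos minus_minus norm_ge_zero mult_nonneg_nonneg power2_eq_iff_nonneg
        power2_abs abs_ge_zero)
  then have "(dist u v)\<^sup>2 = (norm u + norm v)\<^sup>2"
    by (simp add: dist_norm power2_norm_eq_inner inner_commute power2_sum algebra_simps)
  then have "dist u v = norm u + norm v"
    by simp
  then have "between (u, v) 0"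
    by (simp add: between dist_norm)
  then show ?thesis
    by (simp add: between_mem_segment)
qed

lemma heron_product_eq_gram_det:
  fixes u v :: "'a::real_inner"
  defines "a \<equiv> norm u" and "b \<equiv> norm v" and "c \<equiv> norm (u - v)"
  defines "\<sigma> \<equiv> (a + b + c) / 2"
  shows "\<sigma> * (\<sigma> - a) * (\<sigma> - b) * (\<sigma> - c) = gram_det u v / 4"
proof -
  have "\<sigma> * (\<sigma> - a) * (\<sigma> - b) * (\<sigma> - c) = (4 * a\<^sup>2 * b\<^sup>2 - (a\<^sup>2 + b\<^sup>2 - c\<^sup>2)\<^sup>2) / 16"
    by (simp add: \<sigma>_def field_simps power2_eq_square)
  also have "\<dots> = gram_det u v / 4"
  proof -
    have squares: "a\<^sup>2 = u \<bullet> u" "b\<^sup>2 = v \<bullet> v" "c\<^sup>2 = u \<bullet> u + v \<bullet> v - 2 * (u \<bullet> v)"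
      by (simp_all add: a_def b_def c_def power2_norm_eq_inner inner_diff inner_commute)
    show ?thesis
      unfolding squares by (simp add: gram_det_def field_simps power2_eq_square)
  qed
  finally show ?thesis .
qed

lemma circumradius_eq_gram_det:
  fixes p1 p2 p3 :: "'a::real_inner"
  defines "u \<equiv> p1 - p2" and "v \<equiv> p3 - p2"
  shows "circumradius p1 p2 p3 =
    (if gram_det u v = 0 then \<infinity>
     else ereal (norm u * norm v * norm (u - v) / (2 * sqrt (gram_det u v))))"
proof -
  have norms: "norm (p1 - p2) = norm u" "norm (p2 - p3) = norm v" "norm (p1 - p3) = norm (u - v)"
    by (simp_all add: u_def v_def norm_minus_commute)
  have "sqrt (gram_det u v / 4) = sqrt (gram_det u v) / 2"
    by (simp add: real_sqrt_divide)
  then show ?thesis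
    unfolding circumradius_def Let_def norms heron_product_eq_gram_det by simp
qed

theorem theorem1:
  fixes p1 p2 p3 :: "real ^ 'n"
  defines "a \<equiv> norm (p1 - p2)" and "b \<equiv> norm (p2 - p3)" and "c \<equiv> norm (p1 - p3)"
  shows "degree_of_monotonicity [p1, p2, p3] =
           (if a\<^sup>2 + b\<^sup>2 > c\<^sup>2 then ereal (c / 2) else circumradius p1 p2 p3)"
proof -
  define u v where "u = p1 - p2" and "v = p3 - p2"
  have "[p1, p2, p3] = map (\<lambda>p. p + p2) [u, 0, v]"
    by (simp add: u_def v_def)
  then have degree: "degree_of_monotonicity [p1, p2, p3] = degree_of_monotonicity [u, 0, v]"
    by (simp only: degree_of_monotonicity_translate)
  have abc: "a = norm u" "b = norm v" "c = norm (u - v)"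
    by (simp_all add: a_def b_def c_def u_def v_def norm_minus_commute)
  then have acute_iff: "a\<^sup>2 + b\<^sup>2 > c\<^sup>2 \<longleftrightarrow> 0 < u \<bullet> v"
    by (simp add: power2_norm_eq_inner inner_diff inner_commute)
  have circumradius: "circumradius p1 p2 p3 =
      (if gram_det u v = 0 then \<infinity>
       else ereal (norm u * norm v * norm (u - v) / (2 * sqrt (gram_det u v))))"
    unfolding u_def v_def by (rule circumradius_eq_gram_det)
  consider "0 < u \<bullet> v" | "u \<bullet> v \<le> 0" "gram_det u v = 0" | "u \<bullet> v \<le> 0" "0 < gram_det u v"
    using gram_det_nonneg[of u v] by fastforce
  then show ?thesis
  proof cases
    case 1
    then show ?thesis
      using degree acute_iff degree_of_monotonicity_acute by (simp add: abc dist_norm)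
  next
    case 2
    then have "degree_of_monotonicity [u, 0, v] = \<infinity>"
      by (intro degree_of_monotonicity_3_segment zero_in_closed_segment_if_gram_det_eq_0)
    with 2 show ?thesis
      using degree acute_iff circumradius by simp
  next
    case 3
    then show ?thesis
      using degree acute_iff circumradius degree_of_monotonicity_obtuse by simp
  qed
qed

end
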